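(* Let $h_d(x) = 1 - e^{-x}\sum_{i=0}^{d-1} \frac{x^i}{i!}$, let $c^*$ be the unique positive real solution of $2h_2(x)=3h_3(x)$ ($c^*\approx 2.655$), and $\rho = 2h_2(c^* )/c^*\approx 0.5598$. Let $k\ge 4$ be an integer and $c$ a real number with $0<c<40$ and $c\le k$. Let $F$ be the distribution on $\{0,1\}$ with $\mathbb{P}(1)=c/k$. Then $BRev(F^k)/SRev(F^k)\ge \rho$.
   Context: For i.i.d. values $X_1,\dots,X_k\sim F$ of an additive buyer: $SRev(F^k) = k\cdot\sup_{p\ge0} p\,\mathbb{P}(X_1\ge p)$ is the maximal revenue from selling each item separately at posted prices, and $BRev(F^k) = \sup_{p\ge 0} p\,\mathbb{P}(X_1+\dots+X_k\ge p)$ is the maximal revenue from selling all items as one bundle at a posted price. *)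

theory Defs
  imports "HOL-Probability.Probability"
begin

definition h :: "nat \<Rightarrow> real \<Rightarrow> real" where
  "h d x = 1 - exp (- x) * (\<Sum>i<d. x ^ i / fact i)"

definition cstar :: real where
  "cstar = (THE x. x > 0 \<and> 2 * h 2 x = 3 * h 3 x)"

definition rho :: real where
  "rho = 2 * h 2 cstar / cstar"

primrec sum_pmf :: "real pmf \<Rightarrow> nat \<Rightarrow> real pmf" where
  "sum_pmf F 0 = return_pmf 0"
| "sum_pmf F (Suc n) = bind_pmf F (\<lambda>x. map_pmf (\<lambda>s. x + s) (sum_pmf F n))"

definition SRev :: "real pmf \<Rightarrow> nat \<Rightarrow> real" where
  "SRev F k = real k * (SUP p\<in>{0..}. p * measure_pmf.prob F {x. x \<ge> p})"

definition BRev :: "real pmf \<Rightarrow> nat \<Rightarrow> real" where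
  "BRev F k = (SUP p\<in>{0..}. p * measure_pmf.prob (sum_pmf F k) {s. s \<ge> p})"

definition bern01 :: "real \<Rightarrow> real pmf" where
  "bern01 q = map_pmf (\<lambda>b. if b then 1 else 0) (bernoulli_pmf q)"

end

theory Submission
  imports Defs
begin

text \<open>
  Selling separately earns exactly \<open>c\<close>, while pricing the bundle at an integer \<open>j\<close> earns
  \<open>j \<cdot> P(Bin(k, c/k) \<ge> j)\<close>. For \<open>m(k+1) \<le> ck\<close> the lower tail \<open>P(Bin(k, c/k) \<le> m)\<close> is
  nondecreasing in \<open>k\<close> at fixed mean \<open>c\<close>, hence bounded by its Poisson limit, so
  \<open>BRev \<ge> (m+1) h\<^sub>m\<^sub>+\<^sub>1(c)\<close>. Since \<open>x \<mapsto> j h\<^sub>j(x)\<close> is concave on \<open>[j-1, \<infinity>)\<close>, the bound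
  \<open>j h\<^sub>j(x) \<ge> \<rho> x\<close> on an interval follows from its endpoints; finitely many intervals, checked
  with truncated exponential series, cover \<open>(0, 40)\<close>. At \<open>c*\<close> the thresholds \<open>j = 2, 3\<close> are
  tight, which is where \<open>\<rho>\<close> comes from.
\<close>

section \<open>Binomial probabilities as polynomials\<close>

text \<open>\<open>binom_cdf n j p = P(Bin(n,p) < j)\<close>, written as a polynomial in \<open>p\<close> so that it can be
  differentiated on all of \<open>\<real>\<close>.\<close>

definition binom_prob :: "nat \<Rightarrow> nat \<Rightarrow> real \<Rightarrow> real" where
  "binom_prob n i p = real (n choose i) * p ^ i * (1 - p) ^ (n - i)"

definition binom_cdf :: "nat \<Rightarrow> nat \<Rightarrow> real \<Rightarrow> real" where
  "binom_cdf n j p = (\<Sum>i<j. binom_prob n i p)"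

lemma binom_prob_Suc_0: "binom_prob (Suc n) 0 p = (1 - p) * binom_prob n 0 p"
  by (simp add: binom_prob_def)

lemma binom_prob_Suc_Suc:
  "binom_prob (Suc n) (Suc i) p = (1 - p) * binom_prob n (Suc i) p + p * binom_prob n i p"
proof (cases "i < n")
  case True
  then obtain d where "n = i + Suc d"
    using less_imp_Suc_add by (metis add_Suc_right add.commute)
  then show ?thesis by (simp add: binom_prob_def algebra_simps)
next
  case False
  then show ?thesis by (cases "i = n") (auto simp: binom_prob_def binomial_eq_0)
qed

lemma binom_cdf_Suc:
  "binom_cdf (Suc n) (Suc m) p = binom_cdf n (Suc m) p - p * binom_prob n m p"
proof (induction m)
  case 0
  then show ?case by (simp add: binom_cdf_def binom_prob_Suc_0 algebra_simps)
next
  case (Suc m)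
  then show ?case
    by (simp add: binom_cdf_def binom_prob_Suc_Suc algebra_simps)
qed

lemma has_real_derivative_binom_prob:
  "((\<lambda>p. binom_prob (Suc n) i p) has_real_derivative
     real (Suc n) * ((if i = 0 then 0 else binom_prob n (i - 1) p) - binom_prob n i p)) (at p)"
proof -
  let ?C = "real (Suc n choose i)"
  have D: "((\<lambda>p. ?C * p ^ i * (1 - p) ^ (Suc n - i)) has_real_derivative
      ?C * real i * p ^ (i - 1) * (1 - p) ^ (Suc n - i)
      - ?C * real (Suc n - i) * p ^ i * (1 - p) ^ (Suc n - i - 1)) (at p)"
    by (auto intro!: derivative_eq_intros simp: algebra_simps)
  have up: "?C * real i * p ^ (i - 1) * (1 - p) ^ (Suc n - i)
      = real (Suc n) * (if i = 0 then 0 else binom_prob n (i - 1) p)"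
  proof (cases i)
    case (Suc i')
    have "real i * ?C = real (Suc n) * real (n choose i')"
      unfolding Suc by (metis Suc_times_binomial of_nat_mult)
    then show ?thesis using Suc by (simp add: binom_prob_def algebra_simps)
  qed simp
  have down: "?C * real (Suc n - i) * p ^ i * (1 - p) ^ (Suc n - i - 1)
      = real (Suc n) * binom_prob n i p"
  proof -
    have "real (Suc n - i) * ?C = real (Suc n) * real (n choose i)"
      by (metis binomial_absorb_comp diff_Suc_1 of_nat_mult)
    then show ?thesis by (simp add: binom_prob_def algebra_simps)
  qed
  show ?thesis
    using D unfolding up down binom_prob_def[of "Suc n"] by (simp add: algebra_simps)
qed

lemma has_real_derivative_binom_cdf:
  "((\<lambda>p. binom_cdf (Suc n) (Suc m) p) has_real_derivative - real (Suc n) * binom_prob n m p) (at p)"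
proof (induction m)
  case 0
  have "binom_cdf (Suc n) (Suc 0) = binom_prob (Suc n) 0"
    by (simp add: binom_cdf_def fun_eq_iff)
  then show ?case
    by (simp only:) (rule DERIV_cong[OF has_real_derivative_binom_prob], simp add: algebra_simps)
next
  case (Suc m)
  have "binom_cdf (Suc n) (Suc (Suc m)) = (\<lambda>p. binom_cdf (Suc n) (Suc m) p + binom_prob (Suc n) (Suc m) p)"
    by (simp add: binom_cdf_def fun_eq_iff)
  then show ?case
    using DERIV_add[OF Suc has_real_derivative_binom_prob[of n "Suc m" p]] by (simp add: algebra_simps)
qed

lemma binom_prob_le_Suc:
  assumes "m < n" "0 \<le> p" "p \<le> 1" "real (Suc m) \<le> real (Suc n) * p"
  shows "binom_prob n m p \<le> binom_prob n (Suc m) p"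
proof -
  obtain d where d: "n = m + Suc d"
    using assms(1) less_imp_Suc_add by (metis add_Suc_right add.commute)
  have "Suc m * (n choose Suc m) = Suc d * (n choose m)"
    using binomial_absorption[of m n] binomial_absorb_comp[of n m] d by simp
  then have C: "real (Suc m) * real (n choose Suc m) = real (Suc d) * real (n choose m)"
    by (metis of_nat_mult)
  have "real (Suc m) * (binom_prob n (Suc m) p - binom_prob n m p)
      = real (n choose m) * p ^ m * (1 - p) ^ d * (real (Suc d) * p - real (Suc m) * (1 - p))"
  proof -
    have "real (Suc m) * (binom_prob n (Suc m) p - binom_prob n m p)
        = (real (Suc m) * real (n choose Suc m)) * (p ^ Suc m * (1 - p) ^ d)
          - real (Suc m) * real (n choose m) * (p ^ m * (1 - p) ^ Suc d)"
      using d by (simp add: binom_prob_def algebra_simps)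
    then show ?thesis unfolding C by (simp add: algebra_simps)
  qed
  also have "\<dots> \<ge> 0"
    using assms d by (intro mult_nonneg_nonneg) (auto simp: algebra_simps)
  finally show ?thesis by (simp add: zero_le_mult_iff)
qed

section \<open>Monotonicity in the number of trials and the Poisson limit\<close>

text \<open>With \<open>p = (c - q)/(n+1)\<close>, the interpolant
  \<open>q \<mapsto> binom_cdf (n+1) (m+1) p - q \<cdot> binom_prob (n+1) m p\<close> equals
  \<open>binom_cdf (n+1) (m+1) (c/(n+1))\<close> at \<open>q = 0\<close> and, by Pascal's rule,
  \<open>binom_cdf (n+2) (m+1) (c/(n+2))\<close> at \<open>q = c/(n+2)\<close>; in between its derivative is
  nonnegative as long as \<open>m\<close> stays below the mode of \<open>Bin(n, p)\<close>.\<close>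

lemma has_real_derivative_binom_cdf_interpolant:
  fixes n m :: nat and c q :: real
  defines "K \<equiv> real (Suc n)"
  shows "((\<lambda>q. binom_cdf (Suc n) (Suc m) ((c - q) / K) - q * binom_prob (Suc n) m ((c - q) / K))
    has_real_derivative ((c - q) / K - q) *
      (binom_prob n m ((c - q) / K) - (if m = 0 then 0 else binom_prob n (m - 1) ((c - q) / K)))) (at q)"
proof -
  let ?p = "(c - q) / K"
  have K: "K > 0" by (simp add: K_def)
  have dp: "((\<lambda>q. (c - q) / K) has_real_derivative - 1 / K) (at q)"
    using K by (auto intro!: derivative_eq_intros)
  have pascal: "binom_prob (Suc n) m ?p
      = (1 - ?p) * binom_prob n m ?p + ?p * (if m = 0 then 0 else binom_prob n (m - 1) ?p)"
    by (cases m) (simp_all add: binom_prob_Suc_0 binom_prob_Suc_Suc)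
  show ?thesis
    apply (rule DERIV_cong)
     apply (rule DERIV_diff DERIV_mult DERIV_ident
        DERIV_chain2[OF has_real_derivative_binom_cdf dp]
        DERIV_chain2[OF has_real_derivative_binom_prob dp])+
    using K unfolding pascal K_def[symmetric] by (simp add: field_simps)
qed

lemma binom_cdf_interpolant_deriv_nonneg:
  fixes n m :: nat and c q :: real
  defines "K \<equiv> real (Suc n)"
  assumes cn: "c \<le> K" and mK: "real m * (K + 1) \<le> c * K"
    and q: "0 \<le> q" and qK: "q * (K + 1) \<le> c"
  shows "0 \<le> ((c - q) / K - q) *
    (binom_prob n m ((c - q) / K) - (if m = 0 then 0 else binom_prob n (m - 1) ((c - q) / K)))"
proof -
  let ?p = "(c - q) / K"
  have K: "K > 0" by (simp add: K_def)
  have "m \<le> n"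
  proof -
    have "c * K \<le> K * K" using cn K by (simp add: mult_right_mono)
    then have "real m * (K + 1) \<le> K * K" using mK by linarith
    also have "\<dots> < K * (K + 1)" using K by simp
    finally have "real m < K" by (rule mult_right_less_imp_less) (use K in simp)
    then show ?thesis by (simp add: K_def)
  qed
  have "q * 1 \<le> q * (K + 1)" using q K by (intro mult_left_mono) auto
  then have "q \<le> c" using qK by linarith
  then have p0: "0 \<le> ?p" and p1: "?p \<le> 1" and pq: "q \<le> ?p"
    using qK q cn K by (auto simp: field_simps)
  have "(if m = 0 then 0 else binom_prob n (m - 1) ?p) \<le> binom_prob n m ?p"
  proof (cases m)
    case 0
    then show ?thesis using p1 by (simp add: binom_prob_def)
  next
    case (Suc m')
    have "(real m + q) * (K + 1) \<le> c * (K + 1)" using mK qK by (simp add: algebra_simps)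
    then have "real m + q \<le> c" by (rule mult_right_le_imp_le) (use K in simp)
    then have "real m \<le> K * ?p" using K by simp
    then show ?thesis
      using binom_prob_le_Suc[of m' n ?p] \<open>m \<le> n\<close> p0 p1 Suc by (simp add: K_def)
  qed
  then show ?thesis using pq by simp
qed

lemma binom_cdf_le_binom_cdf_Suc:
  assumes c0: "0 \<le> c" and cn: "c \<le> real (Suc n)"
    and m: "real m * (real (Suc n) + 1) \<le> c * real (Suc n)"
  shows "binom_cdf (Suc n) (Suc m) (c / real (Suc n))
    \<le> binom_cdf (Suc (Suc n)) (Suc m) (c / (real (Suc n) + 1))"
proof -
  define K where "K = real (Suc n)"
  define f where "f q = binom_cdf (Suc n) (Suc m) ((c - q) / K) - q * binom_prob (Suc n) m ((c - q) / K)" for q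
  define q1 where "q1 = c / (K + 1)"
  have K: "K > 0" by (simp add: K_def)
  have "K + K * K > 0" using K by (simp add: add_pos_pos)
  then have q1: "0 \<le> q1" "(c - q1) / K = q1"
    using K c0 by (auto simp: q1_def field_simps)
  have "f 0 \<le> f q1"
  proof (rule DERIV_nonneg_imp_nondecreasing[OF q1(1)])
    fix q assume q: "0 \<le> q" "q \<le> q1"
    then have "q * (K + 1) \<le> c" using K by (simp add: q1_def le_divide_eq)
    then show "\<exists>y. (f has_real_derivative y) (at q) \<and> 0 \<le> y"
      using has_real_derivative_binom_cdf_interpolant[of n m c q]
        binom_cdf_interpolant_deriv_nonneg[of c n m q] cn m q(1)
      unfolding f_def K_def by blast
  qed
  moreover have "f q1 = binom_cdf (Suc (Suc n)) (Suc m) (c / (real (Suc n) + 1))"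
    unfolding f_def q1(2) binom_cdf_Suc by (simp add: q1_def K_def)
  ultimately show ?thesis by (simp add: f_def K_def)
qed

lemma binom_cdf_mono_trials:
  assumes k: "k \<ge> 1" and c0: "0 \<le> c" and ck: "c \<le> real k"
    and m: "real m * (real k + 1) \<le> c * real k"
  shows "binom_cdf k (Suc m) (c / real k) \<le> binom_cdf (k + N) (Suc m) (c / real (k + N))"
proof (induction N)
  case 0
  then show ?case by simp
next
  case (Suc N)
  have "real m * (real k + 1) \<le> c * (real k + 1)" using m c0 by (simp add: algebra_simps)
  then have mc: "real m \<le> c" by (simp add: add_pos_pos)
  obtain n where n: "k + N = Suc n" using k by (cases "k + N") auto
  have "c \<le> real (Suc n)" using ck n by (metis le_add1 of_nat_le_iff order.trans)
  moreover have "real m * (real (Suc n) + 1) \<le> c * real (Suc n)"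
  proof -
    have "real m * (real (Suc n) + 1) = real m * (real k + 1) + real m * real N"
      using n by (simp flip: n add: algebra_simps)
    also have "\<dots> \<le> c * real k + c * real N"
      using m mc by (intro add_mono mult_right_mono) auto
    finally show ?thesis using n by (simp flip: n add: algebra_simps)
  qed
  ultimately show ?case
    using Suc binom_cdf_le_binom_cdf_Suc[OF c0] n by fastforce
qed

lemma binom_prob_eq_poisson_factors:
  assumes Ni: "i \<le> N" and Nc: "\<bar>c\<bar> < real N"
  shows "binom_prob N i (c / real N) = (c ^ i / fact i) * (\<Prod>l<i. (real N - real i + 1 + real l) / real N)
    * ((1 + (-c) / real N) ^ N / (1 - c / real N) ^ i)"
proof -
  have "1 - c / real N \<noteq> 0" using Nc by (auto simp: field_simps)
  then have power: "(1 - c / real N) ^ (N - i) = (1 + (-c) / real N) ^ N / (1 - c / real N) ^ i"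
    using Ni by (simp add: power_diff)
  have choose: "real (N choose i) = (\<Prod>l<i. real N - real i + 1 + real l) / fact i"
    unfolding binomial_gbinomial gbinomial_pochhammer' pochhammer_prod
    using Ni by (simp add: atLeast0LessThan of_nat_diff algebra_simps)
  have prod: "(\<Prod>l<i. (real N - real i + 1 + real l) / real N)
      = (\<Prod>l<i. real N - real i + 1 + real l) / real N ^ i"
    by (simp add: prod_dividef)
  show ?thesis
    unfolding binom_prob_def choose power prod by (simp add: power_divide field_simps)
qed

lemma binom_prob_tendsto_poisson:
  "(\<lambda>N. binom_prob N i (c / real N)) \<longlonglongrightarrow> exp (-c) * (c ^ i / fact i)"
proof -
  define g where "g N = (c ^ i / fact i) * (\<Prod>l<i. (real N - real i + 1 + real l) / real N)
        * ((1 + (-c) / real N) ^ N / (1 - c / real N) ^ i)" for N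
  have "eventually (\<lambda>N. g N = binom_prob N i (c / real N)) sequentially"
  proof (rule eventually_sequentiallyI[of "Suc (i + nat \<lceil>\<bar>c\<bar>\<rceil>)"])
    fix N assume "Suc (i + nat \<lceil>\<bar>c\<bar>\<rceil>) \<le> N"
    then have "i \<le> N" "\<bar>c\<bar> < real N" by (auto, linarith)
    then show "g N = binom_prob N i (c / real N)"
      unfolding g_def by (rule binom_prob_eq_poisson_factors[symmetric])
  qed
  moreover have "g \<longlonglongrightarrow> (c ^ i / fact i) * (\<Prod>l<i. 1) * (exp (-c) / (1 - 0) ^ i)"
  proof -
    have "(\<lambda>N. (real N - real i + 1 + real l) / real N) \<longlonglongrightarrow> 1" for l
    proof -
      have "(\<lambda>N. 1 + (real l + 1 - real i) / real N) \<longlonglongrightarrow> 1 + 0"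
        by (intro tendsto_intros)
      moreover have "eventually (\<lambda>N. 1 + (real l + 1 - real i) / real N
          = (real N - real i + 1 + real l) / real N) sequentially"
        by (rule eventually_sequentiallyI[of 1]) (auto simp: field_simps)
      ultimately show ?thesis using tendsto_cong by fastforce
    qed
    then show ?thesis
      unfolding g_def by (intro tendsto_intros tendsto_exp_limit_sequentially) auto
  qed
  ultimately show ?thesis
    using tendsto_cong by (fastforce simp: mult.commute)
qed

lemma binom_cdf_le_poisson_cdf:
  assumes "k \<ge> 1" "0 \<le> c" "c \<le> real k" "real m * (real k + 1) \<le> c * real k"
  shows "binom_cdf k (Suc m) (c / real k) \<le> exp (-c) * (\<Sum>i<Suc m. c ^ i / fact i)"
proof -
  have "(\<lambda>N. binom_cdf N (Suc m) (c / real N)) \<longlonglongrightarrow> exp (-c) * (\<Sum>i<Suc m. c ^ i / fact i)"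
    unfolding binom_cdf_def sum_distrib_left by (intro tendsto_sum binom_prob_tendsto_poisson)
  from LIMSEQ_ignore_initial_segment[OF this, of k] show ?thesis
    by (rule LIMSEQ_le_const) (use binom_cdf_mono_trials[OF assms] in \<open>auto simp: add.commute\<close>)
qed

section \<open>Revenues for the Bernoulli distribution\<close>

lemma sum_pmf_bern01:
  assumes "q \<in> {0..1}"
  shows "sum_pmf (bern01 q) k = map_pmf real (binomial_pmf k q)"
proof (induction k)
  case 0
  then show ?case using assms by (simp add: binomial_pmf_0)
next
  case (Suc n)
  show ?case
    unfolding sum_pmf.simps Suc.IH unfolding bern01_def binomial_pmf_Suc[OF assms]
    by (auto simp: bind_map_pmf map_bind_pmf map_pmf_comp bind_return_pmf map_pmf_def[symmetric]
        o_def intro!: bind_pmf_cong map_pmf_cong)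
qed

lemma prob_sum_pmf_bern01_ge:
  assumes "q \<in> {0..1}"
  shows "measure_pmf.prob (sum_pmf (bern01 q) k) {s. s \<ge> real j} = 1 - binom_cdf k j q"
proof -
  let ?B = "binomial_pmf k q"
  have "measure_pmf.prob (sum_pmf (bern01 q) k) {s. s \<ge> real j} = measure_pmf.prob ?B {i. i \<ge> j}"
    by (simp add: sum_pmf_bern01[OF assms])
  also have "{i. i \<ge> j} = UNIV - {..<j}" by auto
  also have "measure_pmf.prob ?B (UNIV - {..<j}) = 1 - measure_pmf.prob ?B {..<j}"
    using measure_pmf.prob_compl[of "{..<j}" ?B] by simp
  also have "measure_pmf.prob ?B {..<j} = binom_cdf k j q"
    using assms by (simp add: measure_measure_pmf_finite binom_cdf_def binom_prob_def)
  finally show ?thesis .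
qed

lemma prob_bern01_ge:
  assumes "q \<in> {0..1}"
  shows "measure_pmf.prob (bern01 q) {x. x \<ge> p} = (if p \<le> 0 then 1 else if p \<le> 1 then q else 0)"
proof -
  have "{b. (if b then 1 else 0) \<ge> p} = (if p \<le> 0 then UNIV else if p \<le> 1 then {True} else {})"
    by auto
  then show ?thesis using assms by (auto simp: bern01_def measure_pmf_single)
qed

lemma SRev_bern01:
  assumes "q \<in> {0..1}"
  shows "SRev (bern01 q) k = real k * q"
proof -
  have "(SUP p\<in>{0..}. p * measure_pmf.prob (bern01 q) {x. x \<ge> p}) = q"
    unfolding prob_bern01_ge[OF assms]
  proof (rule cSup_eq_maximum)
    show "q \<in> (\<lambda>p. p * (if p \<le> 0 then 1 else if p \<le> 1 then q else 0)) ` {0..}"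
      by (rule image_eqI[of _ _ 1]) auto
    show "x \<le> q" if "x \<in> (\<lambda>p. p * (if p \<le> 0 then 1 else if p \<le> 1 then q else 0)) ` {0..}" for x
      using that assms by (auto simp: mult_le_cancel_right1 mult_left_le_one_le)
  qed
  then show ?thesis by (simp add: SRev_def)
qed

lemma BRev_bern01_ge:
  assumes "q \<in> {0..1}"
  shows "real j * (1 - binom_cdf k j q) \<le> BRev (bern01 q) k"
proof -
  let ?S = "sum_pmf (bern01 q) k"
  have "bdd_above ((\<lambda>p. p * measure_pmf.prob ?S {s. s \<ge> p}) ` {0..})"
  proof (rule bdd_aboveI2)
    fix p :: real assume p: "p \<in> {0..}"
    show "p * measure_pmf.prob ?S {s. s \<ge> p} \<le> real k"
    proof (cases "p \<le> real k")
      case True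
      have "p * measure_pmf.prob ?S {s. s \<ge> p} \<le> p * 1"
        using p by (intro mult_left_mono) auto
      then show ?thesis using True by simp
    next
      case False
      have "set_pmf ?S \<subseteq> real ` {..k}"
        using assms by (auto simp: sum_pmf_bern01 set_pmf_binomial_eq split: if_splits)
      then have "set_pmf ?S \<inter> {s. s \<ge> p} = {}" using False by fastforce
      then have "measure_pmf.prob ?S {s. s \<ge> p} = 0" by (simp add: measure_pmf_zero_iff)
      then show ?thesis by simp
    qed
  qed
  then have "real j * measure_pmf.prob ?S {s. s \<ge> real j} \<le> BRev (bern01 q) k"
    unfolding BRev_def by (rule cSUP_upper[rotated]) auto
  then show ?thesis by (simp add: prob_sum_pmf_bern01_ge[OF assms])
qed

lemma BRev_bern01_ge_h:
  assumes "k \<ge> 1" "0 \<le> c" "c \<le> real k" "real m * (real k + 1) \<le> c * real k"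
  shows "real (Suc m) * h (Suc m) c \<le> BRev (bern01 (c / real k)) k"
proof -
  have q: "c / real k \<in> {0..1}" using assms by auto
  have "h (Suc m) c \<le> 1 - binom_cdf k (Suc m) (c / real k)"
    using binom_cdf_le_poisson_cdf[OF assms] by (simp add: h_def)
  then have "real (Suc m) * h (Suc m) c \<le> real (Suc m) * (1 - binom_cdf k (Suc m) (c / real k))"
    by (intro mult_left_mono) auto
  also have "\<dots> \<le> BRev (bern01 (c / real k)) k" by (rule BRev_bern01_ge[OF q])
  finally show ?thesis .
qed

section \<open>Concavity of \<open>j h\<^sub>j\<close>\<close>

lemma has_real_derivative_poisson_term:
  "((\<lambda>x. exp (-x) * x ^ n / fact n) has_real_derivative
     exp (-x) * (real n * x ^ (n - 1) - x ^ n) / fact n) (at x)"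
  by (auto intro!: derivative_eq_intros simp: field_simps)

lemma has_real_derivative_h: "(h (Suc n) has_real_derivative exp (-x) * x ^ n / fact n) (at x)"
proof (induction n arbitrary: x)
  case 0
  have "h (Suc 0) = (\<lambda>x. 1 - exp (-x))" by (auto simp: h_def)
  then show ?case by (auto intro!: derivative_eq_intros)
next
  case (Suc n)
  have h: "h (Suc (Suc n)) = (\<lambda>x. h (Suc n) x - exp (-x) * x ^ Suc n / fact (Suc n))"
    by (simp add: h_def fun_eq_iff algebra_simps)
  have D: "exp (-x) * x ^ n / fact n
      - exp (-x) * (real (Suc n) * x ^ (Suc n - 1) - x ^ Suc n) / fact (Suc n)
    = exp (-x) * x ^ Suc n / fact (Suc n)"
  proof -
    have "fact n + fact n * real n > (0::real)" by (intro add_pos_nonneg) auto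
    then show ?thesis by (simp add: field_simps fact_Suc)
  qed
  show ?case
    using DERIV_diff[OF Suc.IH[of x] has_real_derivative_poisson_term[of "Suc n" x]] unfolding h D .
qed

text \<open>The derivative \<open>(n+1) e\<^sup>-\<^sup>x x\<^sup>n/n!\<close> of \<open>(n+1) h\<^sub>n\<^sub>+\<^sub>1\<close> decreases past the mode \<open>x = n\<close>.\<close>

lemma concave_on_scaled_h: "concave_on {real n..} (\<lambda>x. real (Suc n) * h (Suc n) x - r * x)"
proof (rule f''_le0_imp_concave)
  fix x assume x: "x \<in> {real n..}"
  show "((\<lambda>x. real (Suc n) * h (Suc n) x - r * x) has_real_derivative
      real (Suc n) * (exp (-x) * x ^ n / fact n) - r) (at x)"
    using DERIV_diff[OF DERIV_cmult[OF has_real_derivative_h] DERIV_cmult[OF DERIV_ident]] by simp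
  show "((\<lambda>x. real (Suc n) * (exp (-x) * x ^ n / fact n) - r) has_real_derivative
      real (Suc n) * (exp (-x) * (real n * x ^ (n - 1) - x ^ n) / fact n)) (at x)"
    using DERIV_diff[OF DERIV_cmult[OF has_real_derivative_poisson_term] DERIV_const] by simp
  have "real n * x ^ (n - 1) \<le> x ^ n"
    using x by (cases n) (auto intro: mult_right_mono)
  then show "real (Suc n) * (exp (-x) * (real n * x ^ (n - 1) - x ^ n) / fact n) \<le> 0"
    by (simp add: mult_nonneg_nonpos divide_nonpos_pos)
qed (rule convex_real_interval)

lemma scaled_h_ge_on_interval:
  assumes "real n \<le> a" "a \<le> x" "x \<le> b"
    and "r * a \<le> real (Suc n) * h (Suc n) a" "r * b \<le> real (Suc n) * h (Suc n) b"
  shows "r * x \<le> real (Suc n) * h (Suc n) x"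
proof -
  have "concave_on {a..b} (\<lambda>x. real (Suc n) * h (Suc n) x - r * x)"
    using convex_on_subset[of "{real n..}"] concave_on_scaled_h[of n r] assms(1)
    unfolding concave_on_def by auto
  from concave_on_ge_min[OF this] show ?thesis using assms by fastforce
qed

section \<open>The constants \<open>c*\<close> and \<open>\<rho>\<close>\<close>

lemma exp_ge_partial_sum:
  fixes x :: real assumes "0 \<le> x"
  shows "(\<Sum>m<n. x ^ m / fact m) \<le> exp x"
proof -
  obtain t where "exp x = (\<Sum>m<n. x ^ m / fact m) + exp t / fact n * x ^ n"
    using Maclaurin_exp_le[of x n] by blast
  moreover have "exp t / fact n * x ^ n \<ge> 0" using assms by simp
  ultimately show ?thesis by linarith
qed

lemma exp_le_partial_sum:
  fixes x :: real assumes "0 \<le> x"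
  shows "exp x * (1 - x ^ n / fact n) \<le> (\<Sum>m<n. x ^ m / fact m)"
proof -
  obtain t where t: "\<bar>t\<bar> \<le> \<bar>x\<bar>" "exp x = (\<Sum>m<n. x ^ m / fact m) + exp t / fact n * x ^ n"
    using Maclaurin_exp_le[of x n] by blast
  have "t \<le> x" using t(1) assms by linarith
  then have "exp t / fact n * x ^ n \<le> exp x / fact n * x ^ n"
    using assms by (intro mult_right_mono divide_right_mono) auto
  moreover have "exp x * (1 - x ^ n / fact n) = exp x - exp x / fact n * x ^ n"
    by (simp add: algebra_simps)
  ultimately show ?thesis using t(2) by linarith
qed

text \<open>\<open>psi x - 1 = 2 h\<^sub>2(x) - 3 h\<^sub>3(x)\<close>; unlike that difference, \<open>psi\<close> has a derivative of
  simple sign: \<open>psi\<close> increases on \<open>[0, 4/3]\<close> and decreases afterwards.\<close>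

definition psi :: "real \<Rightarrow> real" where
  "psi x = exp (-x) * (1 + x + 3/2 * x\<^sup>2)"

lemma two_h2_eq_three_h3_iff: "2 * h 2 x = 3 * h 3 x \<longleftrightarrow> psi x = 1"
  by (simp add: h_def psi_def lessThan_nat_numeral fact_numeral power2_eq_square algebra_simps)

lemma psi_eq_1_iff: "psi x = 1 \<longleftrightarrow> exp x = 1 + x + 3/2 * x\<^sup>2"
  unfolding psi_def by (auto simp: exp_minus field_simps)

lemma has_real_derivative_psi: "(psi has_real_derivative exp (-x) * (x * (2 - 3/2 * x))) (at x)"
  unfolding psi_def by (auto intro!: derivative_eq_intros simp: field_simps power2_eq_square)

lemma psi_less_psi_if_gt:
  assumes "4/3 \<le> a" "a < b"
  shows "psi b < psi a"
proof (rule DERIV_neg_imp_decreasing_open[OF assms(2)])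
  fix z assume "a < z" "z < b"
  then have "exp (-z) * (z * (2 - 3/2 * z)) < 0"
    using assms by (intro mult_pos_neg mult_pos_neg) auto
  then show "\<exists>d. (psi has_real_derivative d) (at z) \<and> d < 0"
    using has_real_derivative_psi by blast
qed (auto simp: psi_def intro!: continuous_intros)

lemma psi_eq_1_imp_ge:
  assumes "x > 0" "psi x = 1"
  shows "x > 4/3"
proof (rule ccontr)
  assume "\<not> x > 4/3"
  have "psi 0 < psi x"
  proof (rule DERIV_pos_imp_increasing_open[OF assms(1)])
    fix y assume "0 < y" "y < x"
    then have "exp (-y) * (y * (2 - 3/2 * y)) > 0"
      using \<open>\<not> x > 4/3\<close> by (intro mult_pos_pos) auto
    then show "\<exists>d. (psi has_real_derivative d) (at y) \<and> d > 0"
      using has_real_derivative_psi by blast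
  qed (auto simp: psi_def intro!: continuous_intros)
  then show False using assms by (simp add: psi_def)
qed

lemma psi_eq_1_unique:
  assumes "x > 0" "psi x = 1" "y > 0" "psi y = 1"
  shows "x = y"
  using psi_less_psi_if_gt[of x y] psi_less_psi_if_gt[of y x]
    psi_eq_1_imp_ge[OF assms(1,2)] psi_eq_1_imp_ge[OF assms(3,4)] assms(2,4)
  by (cases x y rule: linorder_cases) auto

lemma cstar_bounds: "265/100 < cstar" "cstar < 3" "2 * h 2 cstar = 3 * h 3 cstar"
proof -
  define F where "F x = exp x - (1 + x + 3/2 * x\<^sup>2)" for x :: real
  have F_lo: "F (265/100) < 0"
  proof -
    have "exp (265/100::real) * (1 - (265/100) ^ 14 / fact 14) \<le> (\<Sum>m<14. (265/100) ^ m / fact m)"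
      by (rule exp_le_partial_sum) simp
    moreover have "(\<Sum>m<14. (265/100::real) ^ m / fact m)
        < (1 + 265/100 + 3/2 * (265/100)\<^sup>2) * (1 - (265/100) ^ 14 / fact 14)"
      and "(1 - (265/100::real) ^ 14 / fact 14) > 0"
      by (simp_all add: lessThan_nat_numeral fact_numeral power_divide)
    ultimately show ?thesis unfolding F_def by (smt (verit) mult_right_mono)
  qed
  have F_hi: "F 3 > 0"
  proof -
    have "(\<Sum>m<8. (3::real) ^ m / fact m) \<le> exp 3" by (rule exp_ge_partial_sum) simp
    moreover have "(\<Sum>m<8. (3::real) ^ m / fact m) > 1 + 3 + 3/2 * 3\<^sup>2"
      by (simp add: lessThan_nat_numeral fact_numeral)
    ultimately show ?thesis unfolding F_def by linarith
  qed
  obtain x where x: "265/100 \<le> x" "x \<le> 3" "F x = 0"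
    using IVT'[of F "265/100" 0 3] F_lo F_hi by (force simp: F_def intro!: continuous_intros)
  moreover have "x \<noteq> 265/100" "x \<noteq> 3" using x(3) F_lo F_hi by (metis less_irrefl)+
  ultimately have x': "265/100 < x" "x < 3" by auto
  have root: "2 * h 2 x = 3 * h 3 x" using x(3) by (simp add: two_h2_eq_three_h3_iff psi_eq_1_iff F_def)
  have "cstar = x" unfolding cstar_def
  proof (rule the_equality)
    fix y assume "y > 0 \<and> 2 * h 2 y = 3 * h 3 y"
    then show "y = x" using psi_eq_1_unique[of y x] x' root by (simp add: two_h2_eq_three_h3_iff)
  qed (use x' root in simp)
  then show "265/100 < cstar" "cstar < 3" "2 * h 2 cstar = 3 * h 3 cstar" using x' root by auto
qed

lemma rho_le: "rho \<le> 561/1000"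
proof -
  define s where "s = cstar"
  define Q where "Q = 1 + s + 3/2 * s\<^sup>2"
  have s: "265/100 < s" using cstar_bounds by (simp add: s_def)
  have Q: "Q > 0" using s by (simp add: Q_def add_pos_nonneg)
  have e: "exp s = Q"
    using cstar_bounds(3) unfolding two_h2_eq_three_h3_iff psi_eq_1_iff s_def Q_def .
  have "h 2 s = 1 - (1 + s) / Q"
    by (simp add: h_def lessThan_nat_numeral exp_minus e field_simps)
  then have hQ: "h 2 s * Q = 3/2 * s\<^sup>2"
    using Q by (simp add: field_simps) (simp add: Q_def)
  have "rho * Q * s = (rho * s) * Q" by (simp only: ac_simps)
  also have "\<dots> = 2 * (h 2 s * Q)" using s by (simp add: rho_def s_def)
  also have "\<dots> = 3 * s * s" unfolding hQ by (simp add: power2_eq_square)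
  finally have "rho * Q = 3 * s" using s by simp
  moreover have "3 * s \<le> 561/1000 * Q"
  proof -
    have "(s - 265/100) * (s - 265/100) \<ge> 0" by simp
    then show ?thesis using s unfolding Q_def by (simp add: power2_eq_square algebra_simps)
  qed
  ultimately have "rho * Q \<le> 561/1000 * Q" by simp
  then show ?thesis using Q by (rule mult_right_le_imp_le)
qed

section \<open>Numerical bounds on \<open>j h\<^sub>j\<close>\<close>

lemma scaled_h_ge_if_partial_sums:
  fixes a r :: real
  assumes a: "0 \<le> a" and j: "j > 0" and t: "0 \<le> 1 - r * a / real j"
    and sums: "(\<Sum>i<j. a ^ i / fact i) \<le> (1 - r * a / real j) * (\<Sum>i<n. a ^ i / fact i)"
  shows "r * a \<le> real j * h j a"
proof -
  have "exp (-a) * (\<Sum>i<j. a ^ i / fact i) \<le> exp (-a) * ((1 - r * a / real j) * exp a)"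
    using sums exp_ge_partial_sum[OF a, of n] t by (smt (verit) exp_gt_zero mult_left_mono)
  also have "\<dots> = 1 - r * a / real j" by (simp add: exp_minus field_simps)
  finally show ?thesis using j by (simp add: h_def field_simps)
qed

lemma rho_le_scaled_h_at_grid:
  "rho * (126/100) \<le> real 1 * h 1 (126/100)"  "rho * (126/100) \<le> real 2 * h 2 (126/100)"
  "rho * (41/10) \<le> real 3 * h 3 (41/10)"  "rho * (41/10) \<le> real 4 * h 4 (41/10)"
  "rho * (59/10) \<le> real 4 * h 4 (59/10)"  "rho * (59/10) \<le> real 5 * h 5 (59/10)"
  "rho * (39/5) \<le> real 5 * h 5 (39/5)"  "rho * (39/5) \<le> real 7 * h 7 (39/5)"
  "rho * (58/5) \<le> real 7 * h 7 (58/5)"  "rho * (58/5) \<le> real 11 * h 11 (58/5)"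
  "rho * 19 \<le> real 11 * h 11 19"  "rho * 19 \<le> real 18 * h 18 19"
  "rho * (158/5) \<le> real 18 * h 18 (158/5)"  "rho * (158/5) \<le> real 23 * h 23 (158/5)"
  "rho * 40 \<le> real 23 * h 23 40"
proof -
  have bound: "rho * a \<le> real j * h j a"
    if "0 \<le> a" "j > 0" "0 \<le> 1 - 561/1000 * a / real j"
      "(\<Sum>i<j. a ^ i / fact i) \<le> (1 - 561/1000 * a / real j) * (\<Sum>i<n. a ^ i / fact i)"
    for a j n
    using mult_right_mono[OF rho_le that(1)] scaled_h_ge_if_partial_sums[OF that] by linarith
  note eval = lessThan_nat_numeral fact_numeral power_divide
  show "rho * (126/100) \<le> real 1 * h 1 (126/100)" by (rule bound[where n=6]) (simp_all add: eval)
  show "rho * (126/100) \<le> real 2 * h 2 (126/100)" by (rule bound[where n=7]) (simp_all add: eval)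
  show "rho * (41/10) \<le> real 3 * h 3 (41/10)" by (rule bound[where n=10]) (simp_all add: eval)
  show "rho * (41/10) \<le> real 4 * h 4 (41/10)" by (rule bound[where n=10]) (simp_all add: eval)
  show "rho * (59/10) \<le> real 4 * h 4 (59/10)" by (rule bound[where n=12]) (simp_all add: eval)
  show "rho * (59/10) \<le> real 5 * h 5 (59/10)" by (rule bound[where n=11]) (simp_all add: eval)
  show "rho * (39/5) \<le> real 5 * h 5 (39/5)" by (rule bound[where n=13]) (simp_all add: eval)
  show "rho * (39/5) \<le> real 7 * h 7 (39/5)" by (rule bound[where n=14]) (simp_all add: eval)
  show "rho * (58/5) \<le> real 7 * h 7 (58/5)" by (rule bound[where n=17]) (simp_all add: eval)
  show "rho * (58/5) \<le> real 11 * h 11 (58/5)" by (rule bound[where n=20]) (simp_all add: eval)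
  show "rho * 19 \<le> real 11 * h 11 19" by (rule bound[where n=22]) (simp_all add: eval)
  show "rho * 19 \<le> real 18 * h 18 19" by (rule bound[where n=28]) (simp_all add: eval)
  show "rho * (158/5) \<le> real 18 * h 18 (158/5)" by (rule bound[where n=29]) (simp_all add: eval)
  show "rho * (158/5) \<le> real 23 * h 23 (158/5)" by (rule bound[where n=29]) (simp_all add: eval)
  show "rho * 40 \<le> real 23 * h 23 40" by (rule bound[where n=32]) (simp_all add: eval)
qed

section \<open>Choice of the bundle price\<close>

text \<open>\<open>real m \<le> (c - real m) * max 4 c\<close> is the condition \<open>m (k + 1) \<le> c k\<close> of the Poisson
  comparison made independent of \<open>k\<close>, using \<open>k \<ge> max 4 c\<close>.\<close>

lemma threshold_condition_imp_le:
  assumes "real m \<le> (a - real m) * max 4 a"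
  shows "real m \<le> a"
proof (rule ccontr)
  assume "\<not> real m \<le> a"
  then have "(a - real m) * max 4 a < 0" by (intro mult_neg_pos) auto
  then show False using assms by simp
qed

lemma threshold_condition_mono:
  assumes "real m \<le> (a - real m) * max 4 a" "a \<le> c" "max 4 c \<le> d"
  shows "real m \<le> (c - real m) * d"
proof -
  have "(a - real m) * max 4 a \<le> (c - real m) * d"
    using assms threshold_condition_imp_le[OF assms(1)] by (intro mult_mono) auto
  then show ?thesis using assms(1) by linarith
qed

lemma threshold_on_interval:
  assumes m: "real m \<le> (a - real m) * max 4 a" and "a \<le> c" "c \<le> b"
    and "rho * a \<le> real (Suc m) * h (Suc m) a" "rho * b \<le> real (Suc m) * h (Suc m) b"
  shows "real m \<le> (c - real m) * max 4 c \<and> rho * c \<le> real (Suc m) * h (Suc m) c"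
  using threshold_condition_mono[OF m] scaled_h_ge_on_interval[of m a c b]
    threshold_condition_imp_le[OF m] assms
  by auto

lemma exists_bundle_threshold:
  assumes "0 < c" "c < 40"
  obtains m where "real m \<le> (c - real m) * max 4 c" "rho * c \<le> real (Suc m) * h (Suc m) c"
proof -
  note grid = rho_le_scaled_h_at_grid
  have cstar: "rho * cstar = 2 * h 2 cstar" "rho * cstar = 3 * h 3 cstar"
    using cstar_bounds by (simp_all add: rho_def)
  note interval = threshold_on_interval[where c = c]
  consider "c \<le> 126/100" | "126/100 \<le> c \<and> c \<le> cstar" | "cstar \<le> c \<and> c \<le> 41/10"
    | "41/10 \<le> c \<and> c \<le> 59/10" | "59/10 \<le> c \<and> c \<le> 39/5" | "39/5 \<le> c \<and> c \<le> 58/5"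
    | "58/5 \<le> c \<and> c \<le> 19" | "19 \<le> c \<and> c \<le> 158/5" | "158/5 \<le> c \<and> c \<le> 40"
    using assms by linarith
  then show ?thesis
  proof cases
    case 1
    then show ?thesis using that[of 0] interval[of 0 0 "126/100"] grid(1) assms by (simp add: h_def)
  next
    case 2
    then show ?thesis using that[of 1] interval[of 1 "126/100" cstar] grid(2) cstar by (simp add: numeral_2_eq_2[symmetric])
  next
    case 3
    then show ?thesis using that[of 2] interval[of 2 cstar "41/10"] grid(3) cstar cstar_bounds by simp
  next
    case 4
    then show ?thesis using that[of 3] interval[of 3 "41/10" "59/10"] grid(4,5) by simp
  next
    case 5
    then show ?thesis using that[of 4] interval[of 4 "59/10" "39/5"] grid(6,7) by simp
  next
    case 6
    then show ?thesis using that[of 6] interval[of 6 "39/5" "58/5"] grid(8,9) by simp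
  next
    case 7
    then show ?thesis using that[of 10] interval[of 10 "58/5" 19] grid(10,11) by simp
  next
    case 8
    then show ?thesis using that[of 17] interval[of 17 19 "158/5"] grid(12,13) by simp
  next
    case 9
    then show ?thesis using that[of 22] interval[of 22 "158/5" 40] grid(14,15) by simp
  qed
qed

theorem lemma5:
  fixes k :: nat and c :: real
  assumes "k \<ge> 4" and "0 < c" and "c < 40" and "c \<le> real k"
  shows "BRev (bern01 (c / real k)) k / SRev (bern01 (c / real k)) k \<ge> rho"
proof -
  obtain m where m: "real m \<le> (c - real m) * max 4 c"
    and bound: "rho * c \<le> real (Suc m) * h (Suc m) c"
    using exists_bundle_threshold assms(2,3) by blast
  have "real m \<le> (c - real m) * real k"
    using threshold_condition_mono[OF m order.refl] assms by simp
  then have "real m * (real k + 1) \<le> c * real k" by (simp add: algebra_simps)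
  then have "rho * c \<le> BRev (bern01 (c / real k)) k"
    using bound BRev_bern01_ge_h[of k c m] assms by simp
  moreover have "SRev (bern01 (c / real k)) k = c"
    using assms by (simp add: SRev_bern01)
  ultimately show ?thesis using assms(2) by (simp add: le_divide_eq mult.commute)
qed

end
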